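(* Let $v\ge2$ and $k\in\{5,6\}$. Then an optimum $(d,3)$-CDA$((d+1)v^3;k,v)$ exists for every positive integer $d$ with $d+1\le v$.
   Context: Consecutive $t$-way interaction in an $N\times k$ array $A=(a_{ij})$ over a $v$-set $V$: $T=\{(i,x_i),\dots,(i+t-1,x_{i+t-1})\}$, $1\le i\le k-t+1$, $x_r\in V$; $\rho(A,T)=\{r: a_{r,j}=x_j\ \forall (j,x_j)\in T\}$, $\rho(A,\mathcal T)=\bigcup_{T\in\mathcal T}\rho(A,T)$. A $(d,t)$-CDA$(N;k,v)$ is an $N\times k$ array over $V$ in which every $t$ consecutive columns contain every $t$-tuple at least once, and such that for every set $\mathcal T$ of exactly $d$ distinct consecutive $t$-way interactions and every consecutive $t$-way interaction $T$: $\rho(A,T)\subseteq\rho(A,\mathcal T)$ iff $T\in\mathcal T$. It is optimum if $N=(d+1)v^t$. *)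

theory Defs
  imports Main
begin

(* An N x k array over V is a function A :: nat => nat => 'a; rows are 0..<N,
   columns are 0..<k (0-indexed). *)

definition is_array :: "nat \<Rightarrow> nat \<Rightarrow> 'a set \<Rightarrow> (nat \<Rightarrow> nat \<Rightarrow> 'a) \<Rightarrow> bool" where
  "is_array N k V A \<longleftrightarrow> (\<forall>r<N. \<forall>j<k. A r j \<in> V)"

definition consec_interactions :: "nat \<Rightarrow> nat \<Rightarrow> 'a set \<Rightarrow> (nat \<times> 'a) set set" where
  "consec_interactions t k V =
     {T. \<exists>i f. i + t \<le> k \<and> (\<forall>j\<in>{i..<i+t}. f j \<in> V) \<and>
              T = (\<lambda>j. (j, f j)) ` {i..<i+t}}"

definition rho :: "nat \<Rightarrow> (nat \<Rightarrow> nat \<Rightarrow> 'a) \<Rightarrow> (nat \<times> 'a) set \<Rightarrow> nat set" where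
  "rho N A T = {r. r < N \<and> (\<forall>(j, x)\<in>T. A r j = x)}"

definition rho_set :: "nat \<Rightarrow> (nat \<Rightarrow> nat \<Rightarrow> 'a) \<Rightarrow> (nat \<times> 'a) set set \<Rightarrow> nat set" where
  "rho_set N A \<T> = (\<Union>T\<in>\<T>. rho N A T)"

definition is_CDA :: "nat \<Rightarrow> nat \<Rightarrow> nat \<Rightarrow> nat \<Rightarrow> 'a set \<Rightarrow> (nat \<Rightarrow> nat \<Rightarrow> 'a) \<Rightarrow> bool" where
  "is_CDA d t N k V A \<longleftrightarrow>
     is_array N k V A \<and>
     (\<forall>T\<in>consec_interactions t k V. rho N A T \<noteq> {}) \<and>
     (\<forall>\<T>. \<T> \<subseteq> consec_interactions t k V \<and> finite \<T> \<and> card \<T> = d \<longrightarrow>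
        (\<forall>T\<in>consec_interactions t k V. rho N A T \<subseteq> rho_set N A \<T> \<longleftrightarrow> T \<in> \<T>))"

definition is_optimum_CDA :: "nat \<Rightarrow> nat \<Rightarrow> nat \<Rightarrow> nat \<Rightarrow> 'a set \<Rightarrow> (nat \<Rightarrow> nat \<Rightarrow> 'a) \<Rightarrow> bool" where
  "is_optimum_CDA d t N k V A \<longleftrightarrow> is_CDA d t N k V A \<and> N = (d + 1) * card V ^ t"

end

theory Submission
  imports Defs "HOL-Number_Theory.Cong"
begin

text \<open>Index the rows by pairs \<open>(e, q)\<close> with \<open>e \<le> d\<close> and \<open>q < v^t\<close>, and let column \<open>c t + m\<close>
  (\<open>m < t\<close>) show \<open>(q\<^sub>m + c e) mod v\<close>, where \<open>q\<^sub>m\<close> is the \<open>m\<close>-th base-\<open>v\<close> digit of \<open>q\<close>.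
  When \<open>k \<le> 2t\<close>, any \<open>t\<close> consecutive columns meet every residue mod \<open>t\<close> exactly once, so for
  each \<open>e\<close> exactly one row realises a given consecutive \<open>t\<close>-way interaction: every interaction
  is covered \<open>d + 1\<close> times. Two rows agreeing on \<open>t + 1\<close> consecutive columns \<open>i, \<dots>, i + t\<close>
  coincide: columns \<open>i\<close> and \<open>i + t\<close> show \<open>q\<^sub>i\<close> and \<open>q\<^sub>i + e\<close>, which determines \<open>e < v\<close>
  and then every digit. Hence distinct interactions share at most one row, and \<open>d\<close> of them
  cannot cover the \<open>d + 1\<close> rows of another one.\<close>

lemma rho_graph:
  "rho N A ((\<lambda>j. (j, f j)) ` W) = {r. r < N \<and> (\<forall>j\<in>W. A r j = f j)}"
  unfolding rho_def by auto

lemma finite_rho [simp]: "finite (rho N A T)"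
  unfolding rho_def by simp

lemma is_CDA_if_large_and_almost_disjoint:
  assumes "is_array N k V A"
    and large: "\<And>T. T \<in> consec_interactions t k V \<Longrightarrow> d < card (rho N A T)"
    and almost_disjoint: "\<And>T T'. T \<in> consec_interactions t k V \<Longrightarrow> T' \<in> consec_interactions t k V
        \<Longrightarrow> T \<noteq> T' \<Longrightarrow> card (rho N A T \<inter> rho N A T') \<le> 1"
  shows "is_CDA d t N k V A"
proof -
  have "T \<in> \<T>"
    if \<T>: "\<T> \<subseteq> consec_interactions t k V" "finite \<T>" "card \<T> = d"
      and T: "T \<in> consec_interactions t k V" and covered: "rho N A T \<subseteq> rho_set N A \<T>"
    for \<T> T
  proof (rule ccontr)
    assume "T \<notin> \<T>"
    then have "card (rho N A T \<inter> rho N A T') \<le> 1" if "T' \<in> \<T>" for T'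
      using almost_disjoint[OF T] \<T>(1) that by (metis subsetD)
    then have "(\<Sum>T'\<in>\<T>. card (rho N A T \<inter> rho N A T')) \<le> (\<Sum>T'\<in>\<T>. 1)"
      by (rule sum_mono)
    also have "\<dots> = d"
      using \<T>(3) by simp
    finally have "(\<Sum>T'\<in>\<T>. card (rho N A T \<inter> rho N A T')) \<le> d" .
    moreover have "rho N A T = (\<Union>T'\<in>\<T>. rho N A T \<inter> rho N A T')"
      using covered unfolding rho_set_def by blast
    then have "card (rho N A T) \<le> (\<Sum>T'\<in>\<T>. card (rho N A T \<inter> rho N A T'))"
      by (metis card_UN_le \<T>(2))
    ultimately show False
      using large[OF T] by simp
  qed
  moreover have "rho N A T \<noteq> {}" if "T \<in> consec_interactions t k V" for T
    using large[OF that] by auto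
  ultimately show ?thesis
    using assms(1) unfolding is_CDA_def rho_set_def by blast
qed

definition digit :: "nat \<Rightarrow> nat \<Rightarrow> nat \<Rightarrow> nat" where
  "digit v q m = q div v ^ m mod v"

lemma digit_Suc: "digit v q (Suc m) = digit v (q div v) m"
  unfolding digit_def by (simp add: div_mult2_eq)

lemma eq_if_digits_eq:
  assumes "q < v ^ n" "q' < v ^ n" "\<And>m. m < n \<Longrightarrow> digit v q m = digit v q' m"
  shows "q = q'"
  using assms
proof (induction n arbitrary: q q')
  case 0
  then show ?case by simp
next
  case (Suc n)
  have "q div v < v ^ n" "q' div v < v ^ n"
    using Suc.prems(1,2) by (simp_all add: less_mult_imp_div_less mult.commute)
  moreover have "digit v (q div v) m = digit v (q' div v) m" if "m < n" for m
    using Suc.prems(3)[of "Suc m"] that by (simp add: digit_Suc)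
  ultimately have "q div v = q' div v"
    by (rule Suc.IH)
  moreover have "q mod v = q' mod v"
    using Suc.prems(3)[of 0] by (simp add: digit_def)
  ultimately show ?case
    by (metis div_mult_mod_eq)
qed

lemma digits_surj:
  assumes "\<And>m. m < n \<Longrightarrow> D m < v"
  shows "\<exists>q < v ^ n. \<forall>m < n. digit v q m = D m"
  using assms
proof (induction n arbitrary: D)
  case 0
  then show ?case by simp
next
  case (Suc n)
  obtain q where q: "q < v ^ n" "\<And>m. m < n \<Longrightarrow> digit v q m = D (Suc m)"
    using Suc.IH[of "\<lambda>m. D (Suc m)"] Suc.prems by auto
  have D0: "D 0 < v"
    using Suc.prems by simp
  have "D 0 + v * q < v + v * q"
    using D0 by simp
  also have "\<dots> = v * Suc q"
    by simp
  also have "\<dots> \<le> v * v ^ n"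
    using q(1) by (intro mult_le_mono2) simp
  finally have "D 0 + v * q < v ^ Suc n"
    by simp
  moreover have "(D 0 + v * q) div v = q"
    using D0 by simp
  then have "digit v (D 0 + v * q) m = D m" if "m < Suc n" for m
    using D0 q(2) that by (cases m) (simp_all add: digit_Suc, simp add: digit_def)
  ultimately show ?case
    by blast
qed

lemma mod_add_left_cancel_less:
  fixes a x y v :: nat
  assumes "(a + x) mod v = (a + y) mod v" "x < v" "y < v"
  shows "x = y"
proof -
  have "[x = y] (mod v)"
    using assms(1) cong_add_lcancel_nat unfolding cong_def by blast
  then show ?thesis
    using assms(2,3) by (rule cong_less_modulus_unique_nat)
qed

lemma inj_on_mod_window: "inj_on (\<lambda>j. j mod t) {i..<i + (t::nat)}"
proof (rule linorder_inj_onI')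
  fix j j' :: nat
  assume "j \<in> {i..<i+t}" "j' \<in> {i..<i+t}" "j < j'"
  show "j mod t \<noteq> j' mod t"
  proof
    assume "j mod t = j' mod t"
    then obtain s where "j' = j + t * s"
      using mod_eq_nat1E[of j' t j] \<open>j < j'\<close> by auto
    with \<open>j \<in> {i..<i+t}\<close> \<open>j' \<in> {i..<i+t}\<close> \<open>j < j'\<close> show False
      by (cases s) auto
  qed
qed

definition window_column :: "nat \<Rightarrow> nat \<Rightarrow> nat \<Rightarrow> nat" where
  "window_column t i m = (if i \<le> m then m else t + m)"

lemma window_column:
  assumes "i \<le> t" "m < t"
  shows "window_column t i m \<in> {i..<i+t}" "window_column t i m mod t = m"
  using assms by (auto simp: window_column_def)

lemma window_column_of_mod:
  assumes "i \<le> t" "j \<in> {i..<i+t}"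
  shows "window_column t i (j mod t) = j"
proof -
  have "j mod t < t"
    using assms(2) by auto
  then show ?thesis
    using inj_onD[OF inj_on_mod_window] window_column[OF assms(1)] assms(2) by blast
qed

definition cda_array :: "nat \<Rightarrow> nat \<Rightarrow> nat \<Rightarrow> nat \<Rightarrow> nat \<Rightarrow> nat" where
  "cda_array d v t r j = (digit v (r div (d+1)) (j mod t) + j div t * (r mod (d+1))) mod v"

lemma cda_array_realizes_window:
  assumes "d < v" "i \<le> t" "\<forall>j\<in>{i..<i+t}. f j < v" "e \<le> d"
  obtains r where "r < (d+1) * v ^ t" "r mod (d+1) = e"
    "\<forall>j\<in>{i..<i+t}. cda_array d v t r j = f j"
proof -
  define D where
    "D m = (f (window_column t i m) + (v - e) * (window_column t i m div t)) mod v" for m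
  obtain q where q: "q < v ^ t" "\<And>m. m < t \<Longrightarrow> digit v q m = D m"
    using digits_surj[of t D v] assms(1) unfolding D_def by auto
  define r where "r = e + (d+1) * q"
  have r_mod: "r mod (d+1) = e"
    unfolding r_def mod_mult_self2 using assms(4) by simp
  have r_div: "r div (d+1) = q"
  proof -
    have "(e + (d+1) * q) div (d+1) = q + e div (d+1)"
      by (rule div_mult_self2) simp
    then show ?thesis
      unfolding r_def using assms(4) by simp
  qed
  have "r < (d+1) + (d+1) * q"
    using assms(4) unfolding r_def by simp
  also have "\<dots> = (d+1) * Suc q"
    by simp
  also have "\<dots> \<le> (d+1) * v ^ t"
    using q(1) by (intro mult_le_mono2) simp
  finally have "r < (d+1) * v ^ t" .
  moreover have "cda_array d v t r j = f j" if j: "j \<in> {i..<i+t}" for j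
  proof -
    let ?c = "j div t"
    have "t > 0"
      using j by auto
    then have "digit v q (j mod t) = (f j + (v - e) * ?c) mod v"
      using q(2) window_column_of_mod[OF assms(2) j] unfolding D_def by simp
    then have "cda_array d v t r j = (f j + ((v - e) * ?c + ?c * e)) mod v"
      unfolding cda_array_def r_mod r_div by (simp add: mod_add_left_eq add.assoc)
    also have "(v - e) * ?c + ?c * e = ?c * v"
      using assms(1,4) by (simp add: diff_mult_distrib algebra_simps)
    finally show ?thesis
      using assms(3) j by simp
  qed
  ultimately show ?thesis
    using that r_mod by blast
qed

lemma card_rho_cda_array:
  assumes "d < v" "k \<le> 2 * t" "T \<in> consec_interactions t k {0..<v}"
  shows "d < card (rho ((d+1) * v ^ t) (cda_array d v t) T)"
proof -
  obtain i f where i: "i + t \<le> k" and f: "\<forall>j\<in>{i..<i+t}. f j < v"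
    and T: "T = (\<lambda>j. (j, f j)) ` {i..<i+t}"
    using assms(3) unfolding consec_interactions_def by auto
  have i_le: "i \<le> t"
    using i assms(2) by simp
  have "\<exists>r. r < (d+1) * v ^ t \<and> r mod (d+1) = e \<and> (\<forall>j\<in>{i..<i+t}. cda_array d v t r j = f j)"
    if "e \<le> d" for e
    by (rule cda_array_realizes_window[OF assms(1) i_le f that]) blast
  then obtain row where row: "\<And>e. e \<le> d \<Longrightarrow> row e < (d+1) * v ^ t \<and> row e mod (d+1) = e
      \<and> (\<forall>j\<in>{i..<i+t}. cda_array d v t (row e) j = f j)"
    by metis
  have "inj_on row {..d}"
    by (rule inj_on_inverseI[where g = "\<lambda>r. r mod (d+1)"]) (use row in auto)
  moreover have "row ` {..d} \<subseteq> rho ((d+1) * v ^ t) (cda_array d v t) T"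
    unfolding T rho_graph using row by auto
  ultimately have "card {..d} \<le> card (rho ((d+1) * v ^ t) (cda_array d v t) T)"
    by (metis card_image card_mono finite_rho)
  then show ?thesis
    by simp
qed

lemma cda_array_rows_eq_if_agree:
  assumes "d < v" "i < t" "r < (d+1) * v ^ t" "s < (d+1) * v ^ t"
    and agree: "\<And>j. j \<in> {i..i+t} \<Longrightarrow> cda_array d v t r j = cda_array d v t s j"
  shows "r = s"
proof -
  let ?D = "\<lambda>r. digit v (r div (d+1))"
  have v: "0 < v"
    using assms(1) by simp
  have e_less: "x mod (d+1) < v" for x
    using mod_less_divisor[of "d+1" x] assms(1) by linarith
  have "?D r i = ?D s i"
    using agree[of i] assms(2) by (simp add: cda_array_def digit_def)
  moreover have "(i + t) div t = 1" "(i + t) mod t = i"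
    using assms(2) div_add_self2[of t i] by simp_all
  ultimately have "(?D s i + r mod (d+1)) mod v = (?D s i + s mod (d+1)) mod v"
    using agree[of "i+t"] by (simp add: cda_array_def)
  then have e: "r mod (d+1) = s mod (d+1)"
    by (rule mod_add_left_cancel_less) (rule e_less)+
  have "?D r m = ?D s m" if m: "m < t" for m
  proof -
    let ?j = "window_column t i m"
    have "?j \<in> {i..i+t}" and j_mod: "?j mod t = m"
      using window_column[of i t m] m assms(2) by auto
    from agree[OF this(1)]
    have "(?D r m + ?j div t * (s mod (d+1))) mod v = (?D s m + ?j div t * (s mod (d+1))) mod v"
      unfolding cda_array_def j_mod e .
    then have "(?j div t * (s mod (d+1)) + ?D r m) mod v = (?j div t * (s mod (d+1)) + ?D s m) mod v"
      by (simp only: add.commute)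
    then show ?thesis
      by (rule mod_add_left_cancel_less) (simp_all add: digit_def v)
  qed
  moreover have "r div (d+1) < v ^ t" "s div (d+1) < v ^ t"
    using assms(3,4) by (simp_all add: less_mult_imp_div_less mult.commute)
  ultimately have "r div (d+1) = s div (d+1)"
    using eq_if_digits_eq by blast
  with e show "r = s"
    by (metis div_mult_mod_eq)
qed

lemma card_rho_inter_cda_array:
  fixes T T' :: "(nat \<times> nat) set"
  assumes "d < v" "k \<le> 2 * t" "T \<in> consec_interactions t k {0..<v}"
    "T' \<in> consec_interactions t k {0..<v}" "T \<noteq> T'"
  shows "card (rho ((d+1) * v ^ t) (cda_array d v t) T
    \<inter> rho ((d+1) * v ^ t) (cda_array d v t) T') \<le> 1"
proof -
  let ?N = "(d+1) * v ^ t" and ?A = "cda_array d v t"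
  obtain i f where i: "i + t \<le> k" and T: "T = (\<lambda>j. (j, f j)) ` {i..<i+t}"
    using assms(3) unfolding consec_interactions_def by auto
  obtain i' f' where i': "i' + t \<le> k" and T': "T' = (\<lambda>j. (j, f' j)) ` {i'..<i'+t}"
    using assms(4) unfolding consec_interactions_def by auto
  have "r = s" if r: "r \<in> rho ?N ?A T \<inter> rho ?N ?A T'" and s: "s \<in> rho ?N ?A T \<inter> rho ?N ?A T'"
    for r s
  proof -
    have r_row: "r < ?N" "\<forall>j\<in>{i..<i+t}. ?A r j = f j" "\<forall>j\<in>{i'..<i'+t}. ?A r j = f' j"
      using r unfolding T T' rho_graph by auto
    have s_row: "s < ?N" "\<forall>j\<in>{i..<i+t}. ?A s j = f j" "\<forall>j\<in>{i'..<i'+t}. ?A s j = f' j"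
      using s unfolding T T' rho_graph by auto
    have "i \<noteq> i'"
    proof
      assume "i = i'"
      then have "T = T'"
        unfolding T T' using r_row by (intro image_cong) auto
      with assms(5) show False ..
    qed
    then have "min i i' < t" "{min i i'..min i i' + t} \<subseteq> {i..<i+t} \<union> {i'..<i'+t}"
      using i i' assms(2) by auto
    moreover have "?A r j = ?A s j" if "j \<in> {i..<i+t} \<union> {i'..<i'+t}" for j
      using that r_row s_row by auto
    ultimately show "r = s"
      using cda_array_rows_eq_if_agree[OF assms(1) _ r_row(1) s_row(1)] by blast
  qed
  then show ?thesis
    by (simp add: card_le_Suc0_iff_eq)
qed

theorem is_optimum_CDA_cda_array:
  assumes "d < v" "k \<le> 2 * t"
  shows "is_optimum_CDA d t ((d+1) * v ^ t) k {0..<v} (cda_array d v t)"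
  unfolding is_optimum_CDA_def
proof
  show "is_CDA d t ((d+1) * v ^ t) k {0..<v} (cda_array d v t)"
  proof (rule is_CDA_if_large_and_almost_disjoint)
    show "is_array ((d+1) * v ^ t) k {0..<v} (cda_array d v t)"
      using assms(1) by (simp add: is_array_def cda_array_def)
  qed (use card_rho_cda_array[OF assms] card_rho_inter_cda_array[OF assms] in auto)
qed simp

theorem mainTheorem16:
  fixes v k d :: nat
  assumes "v \<ge> 2" and "k \<in> {5, 6}" and "d > 0" and "d + 1 \<le> v"
  shows "\<exists>A :: nat \<Rightarrow> nat \<Rightarrow> nat.
           is_optimum_CDA d 3 ((d + 1) * v ^ 3) k {0..<v} A"
  using is_optimum_CDA_cda_array[of d v k 3] assms by auto

end
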